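(* Consider an $n$-player team problem with common cost $c$ satisfying Assumptions A1, A4, A5 and A7. Let $\{\mu_m\}$ and $\mu$ be information structures satisfying Assumption A3 with $\mu_m\to\mu$ weakly, and assume in addition that either (a) all $\mu_m$ and $\mu$ have the same $\mathbb{X}$-marginal (fixed prior), or (b) $c$ is continuous and bounded (Assumption A2). Then the team value function is upper semicontinuous along this sequence: $$\limsup_{m\to\infty}J^*(c,\mu_m)\le J^*(c,\mu).$$
   Context: $\mathbb{X},\mathbb{Y}^1,\dots,\mathbb{Y}^n$ are standard Borel spaces. An information structure is a probability measure $\mu$ on $\mathbb{X}\times\mathbb{Y}^1\times\cdots\times\mathbb{Y}^n$; its $\mathbb{X}$-marginal $\zeta$ is the prior. A team problem consists of standard Borel action spaces $\mathbb{U}^i$ and a common measurable cost $c:\mathbb{X}\times\mathbb{U}^1\times\cdots\times\mathbb{U}^n\to\mathbb{R}$; for a team policy $\bar\gamma=(\gamma^1,\dots,\gamma^n)$ with measurable $\gamma^i:\mathbb{Y}^i\to\mathbb{U}^i$, $J(c,\mu,\bar\gamma)=\int c(x,\gamma^1(y^1),\dots,\gamma^n(y^n))\,d\mu$, and $J^*(c,\mu)=\inf_{\bar\gamma}J(c,\mu,\bar\gamma)$. Weak convergence: $\int f d\mu_m\to\int f d\mu$ for every bounded continuous $f$. Assumptions: A1: the cost is measurable and bounded. A2: the cost is continuous and bounded. A3: $\mu\ll\zeta(dx)\bar Q^1(dy^1)\cdots\bar Q^n(dy^n)$ for some probability measures $\bar Q^i$ on $\mathbb{Y}^i$. A4: each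 action space is compact. A5: the bounded measurable cost is continuous in the players' actions for each fixed $x$, and each action space is compact. A7: each action space is a convex subset of $\mathbb{R}^k$ for some $k$. *)

theory Defs
  imports "HOL-Probability.Probability"
begin

text \<open>
  Players are indexed by a finite type 'i. The state space is a Polish type 'x,
  observation spaces are (closed subsets of) a common Polish type 'y, so the joint
  observation is a function 'i => 'y.  Action spaces are subsets U i of a common
  Euclidean space 'u.
\<close>

definition info_structure :: "('x::topological_space \<times> 'y::topological_space) measure \<Rightarrow> bool" where
  "info_structure \<mu> \<longleftrightarrow> prob_space \<mu> \<and> sets \<mu> = sets borel"

definition prior :: "('x::topological_space \<times> 'y::topological_space) measure \<Rightarrow> 'x measure" where
  "prior \<mu> = distr \<mu> borel fst"

definition team_policies ::
  "('i \<Rightarrow> 'u::topological_space set) \<Rightarrow> ('i \<Rightarrow> 'y::topological_space \<Rightarrow> 'u) set" where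
  "team_policies U = {\<gamma>. \<forall>i. \<gamma> i \<in> borel_measurable borel \<and> (\<forall>y. \<gamma> i y \<in> U i)}"

definition team_cost ::
  "('x \<times> ('i \<Rightarrow> 'u) \<Rightarrow> real) \<Rightarrow> ('x \<times> ('i \<Rightarrow> 'y)) measure \<Rightarrow> ('i \<Rightarrow> 'y \<Rightarrow> 'u) \<Rightarrow> real" where
  "team_cost c \<mu> \<gamma> = (\<integral>z. c (fst z, \<lambda>i. \<gamma> i (snd z i)) \<partial>\<mu>)"

definition team_value ::
  "('i \<Rightarrow> 'u::topological_space set) \<Rightarrow> ('x \<times> ('i \<Rightarrow> 'u) \<Rightarrow> real) \<Rightarrow>
   ('x \<times> ('i \<Rightarrow> 'y::topological_space)) measure \<Rightarrow> real" where
  "team_value U c \<mu> = (INF \<gamma>\<in>team_policies U. team_cost c \<mu> \<gamma>)"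

definition assumption_A3 :: "('x::topological_space \<times> ('i \<Rightarrow> 'y::topological_space)) measure \<Rightarrow> bool" where
  "assumption_A3 \<mu> \<longleftrightarrow> (\<exists>Q :: 'i \<Rightarrow> 'y measure.
     (\<forall>i. prob_space (Q i) \<and> sets (Q i) = sets borel) \<and>
     absolutely_continuous (prior \<mu> \<Otimes>\<^sub>M (\<Pi>\<^sub>M i\<in>UNIV. Q i)) \<mu>)"

definition weak_conv_seq :: "(nat \<Rightarrow> 'a::topological_space measure) \<Rightarrow> 'a measure \<Rightarrow> bool" where
  "weak_conv_seq \<mu>s \<mu> \<longleftrightarrow> (\<forall>f :: 'a \<Rightarrow> real. continuous_on UNIV f \<and> bounded (range f) \<longrightarrow>
      (\<lambda>m. \<integral>z. f z \<partial>\<mu>s m) \<longlonglongrightarrow> (\<integral>z. f z \<partial>\<mu>))"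

end

theory Submission
  imports Defs
begin

text \<open>
  Fix \<open>\<epsilon> > 0\<close> and a policy \<open>\<gamma>\<close> that is \<open>\<epsilon>\<close>-optimal for \<open>\<mu>\<close>. Since the action sets are compact and
  convex, \<open>\<gamma>\<close> can be replaced by a policy \<open>h\<close> with continuous components at an extra cost of
  at most \<open>\<epsilon>\<close>: each component is approximated in \<open>L\<^sup>1\<close> of its observation marginal by a
  continuous function (inner and outer regularity plus Urysohn's lemma) and then projected onto
  the action set; the change in cost is controlled by the modulus of continuity of \<open>c\<close> in the
  actions, whose integral against the prior tends to \<open>0\<close>. For such an \<open>h\<close> the cost
  \<open>J(c, \<mu>\<^sub>m, h)\<close> converges to \<open>J(c, \<mu>, h)\<close>: under (b) the integrand is bounded and continuous; under
  (a) a partition of unity on the actions reduces the integrand, up to the modulus of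
  continuity, to finite sums of products of a measurable function of the state and a
  continuous function of the observations, whose integrals converge because the prior is fixed.
  Therefore \<open>limsup J\<^sup>*(c, \<mu>\<^sub>m) \<le> J(c, \<mu>, h) \<le> J\<^sup>*(c, \<mu>) + 2\<epsilon>\<close>.
\<close>

section \<open>Approximation in \<open>L\<^sup>1\<close> by continuous functions\<close>

lemma Urysohn_metric_closed_open:
  fixes K V :: "'a::metric_space set"
  assumes K: "closed K" and V: "open V" and KV: "K \<subseteq> V"
  obtains \<phi> :: "'a \<Rightarrow> real" where "continuous_on UNIV \<phi>" "\<And>x. 0 \<le> \<phi> x \<and> \<phi> x \<le> 1"
    "\<And>x. x \<in> K \<Longrightarrow> \<phi> x = 1" "\<And>x. x \<notin> V \<Longrightarrow> \<phi> x = 0"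
proof (cases "K = {} \<or> V = UNIV")
  case True
  show ?thesis
  proof (cases "K = {}")
    case True
    then show ?thesis
      by (intro that[of "\<lambda>_. 0"]) auto
  next
    case False
    then show ?thesis
      using \<open>K = {} \<or> V = UNIV\<close> by (intro that[of "\<lambda>_. 1"]) auto
  qed
next
  case False
  then have ne: "K \<noteq> {}" "- V \<noteq> {}" by auto
  have pos: "infdist x (- V) + infdist x K > 0" for x
  proof -
    have "x \<notin> - V \<or> x \<notin> K" using KV by auto
    then have "infdist x (- V) \<noteq> 0 \<or> infdist x K \<noteq> 0"
      using in_closed_iff_infdist_zero[OF _ ne(2)] in_closed_iff_infdist_zero[OF K ne(1)] V
      by (metis closed_Compl)
    then show ?thesis using infdist_nonneg[of x "-V"] infdist_nonneg[of x K] by linarith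
  qed
  show ?thesis
  proof (rule that[of "\<lambda>x. infdist x (- V) / (infdist x (- V) + infdist x K)"])
    show "continuous_on UNIV (\<lambda>x. infdist x (- V) / (infdist x (- V) + infdist x K))"
      using pos by (intro continuous_intros) (auto simp: less_le)
    fix x
    show "0 \<le> infdist x (- V) / (infdist x (- V) + infdist x K) \<and>
        infdist x (- V) / (infdist x (- V) + infdist x K) \<le> 1"
      using pos[of x] infdist_nonneg[of x K] infdist_nonneg[of x "- V"] by (auto simp: divide_simps)
    show "x \<in> K \<Longrightarrow> infdist x (- V) / (infdist x (- V) + infdist x K) = 1"
      using pos[of x] by (simp add: infdist_zero)
    show "x \<notin> V \<Longrightarrow> infdist x (- V) / (infdist x (- V) + infdist x K) = 0"
      by (simp add: infdist_zero)
  qed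
qed

lemma integrable_bounded_borel:
  fixes f :: "'a::topological_space \<Rightarrow> real"
  assumes "finite_measure M" "sets M = sets borel" "f \<in> borel_measurable borel" "\<And>x. \<bar>f x\<bar> \<le> K"
  shows "integrable M f"
  using assms measurable_cong_sets[OF assms(2) refl]
  by (intro finite_measure.integrable_const_bound[where B=K]) auto

lemma integral_abs_add_le:
  fixes f g :: "'a::topological_space \<Rightarrow> real"
  assumes M: "finite_measure M" "sets M = sets borel"
    and f: "f \<in> borel_measurable borel" "\<And>x. \<bar>f x\<bar> \<le> Kf"
    and g: "g \<in> borel_measurable borel" "\<And>x. \<bar>g x\<bar> \<le> Kg"
  shows "(\<integral>x. \<bar>f x + g x\<bar> \<partial>M) \<le> (\<integral>x. \<bar>f x\<bar> \<partial>M) + (\<integral>x. \<bar>g x\<bar> \<partial>M)"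
proof -
  have f': "integrable M f" and g': "integrable M g"
    using integrable_bounded_borel[OF M] f g by blast+
  have "(\<integral>x. \<bar>f x + g x\<bar> \<partial>M) \<le> (\<integral>x. \<bar>f x\<bar> + \<bar>g x\<bar> \<partial>M)"
    using f' g' by (intro integral_mono) (auto intro: abs_triangle_ineq)
  also have "\<dots> = (\<integral>x. \<bar>f x\<bar> \<partial>M) + (\<integral>x. \<bar>g x\<bar> \<partial>M)"
    using f' g' by (intro Bochner_Integration.integral_add) auto
  finally show ?thesis .
qed

lemma compact_open_approx_measure:
  fixes M :: "'a::polish_space measure" and e :: real
  assumes M: "finite_measure M" "sets M = sets borel" and A: "A \<in> sets borel" and e: "e > 0"
  obtains K V where "compact K" "open V" "K \<subseteq> A" "A \<subseteq> V" "measure M V < measure M K + e"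
proof -
  interpret finite_measure M by (rule M(1))
  have fin: "emeasure M (space M) \<noteq> \<infinity>" by simp
  obtain K where K: "K \<subseteq> A" "compact K" "measure M A < measure M K + e/2"
  proof (cases "measure M A < e/2")
    case True
    show ?thesis by (rule that[of "{}"]) (use True in auto)
  next
    case False
    have "ennreal (measure M A - e/2) < emeasure M A"
      using False e by (simp add: emeasure_eq_measure ennreal_less_iff)
    then obtain K where K: "K \<subseteq> A" "compact K" "ennreal (measure M A - e/2) < emeasure M K"
      unfolding inner_regular[OF M(2) fin A] by (auto simp: less_SUP_iff)
    then show ?thesis
      using False e by (intro that[of K]) (auto simp: emeasure_eq_measure ennreal_less_iff)
  qed
  obtain V where V: "A \<subseteq> V" "open V" "measure M V < measure M A + e/2"
  proof -
    have "emeasure M A < ennreal (measure M A + e/2)"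
      using e by (simp add: emeasure_eq_measure ennreal_less_iff)
    then obtain V where "A \<subseteq> V" "open V" "emeasure M V < ennreal (measure M A + e/2)"
      unfolding outer_regular[OF M(2) fin A] by (auto simp: INF_less_iff)
    then show ?thesis
      by (intro that[of V]) (auto simp: emeasure_eq_measure ennreal_less_iff)
  qed
  show ?thesis
    using K V by (intro that[of K V]) auto
qed

lemma indicator_L1_approx_continuous:
  fixes M :: "'a::polish_space measure" and e :: real
  assumes M: "finite_measure M" "sets M = sets borel" and A: "A \<in> sets borel" and e: "e > 0"
  obtains \<phi> where "continuous_on UNIV \<phi>" "\<And>x. 0 \<le> \<phi> x \<and> \<phi> x \<le> 1"
    "(\<integral>x. \<bar>indicator A x - \<phi> x\<bar> \<partial>M) < e"
proof -
  interpret finite_measure M by (rule M(1))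
  obtain K V where K: "compact K" "K \<subseteq> A" and V: "open V" "A \<subseteq> V"
    and KV_small: "measure M V < measure M K + e"
    by (rule compact_open_approx_measure[OF M A e])
  have KV: "K \<in> sets M" "V \<in> sets M" "K \<subseteq> V"
    using K V M(2) by (auto intro: borel_closed compact_imp_closed)
  obtain \<phi> :: "'a \<Rightarrow> real" where \<phi>: "continuous_on UNIV \<phi>" "\<And>x. 0 \<le> \<phi> x \<and> \<phi> x \<le> 1"
    "\<And>x. x \<in> K \<Longrightarrow> \<phi> x = 1" "\<And>x. x \<notin> V \<Longrightarrow> \<phi> x = 0"
    using Urysohn_metric_closed_open[OF compact_imp_closed[OF K(1)] V(1) KV(3)] by blast
  have "\<bar>indicator A x - \<phi> x\<bar> \<le> indicator (V - K) x" "\<bar>indicator A x - \<phi> x\<bar> \<le> 1" for x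
    using \<phi>(2-4)[of x] K(2) V(2) by (auto simp: indicator_def)
  then have "(\<integral>x. \<bar>indicator A x - \<phi> x\<bar> \<partial>M) \<le> (\<integral>x. indicator (V - K) x \<partial>M)"
    using A KV M(2) borel_measurable_continuous_onI[OF \<phi>(1)]
    by (intro integral_mono integrable_bounded_borel[OF M, where K=1]) auto
  also have "\<dots> = measure M V - measure M K"
    using KV by (simp add: finite_measure_Diff)
  finally show ?thesis using KV_small \<phi>(1,2) by (intro that) auto
qed

definition continuous_L1_approximable :: "'a::topological_space measure \<Rightarrow> ('a \<Rightarrow> real) \<Rightarrow> bool" where
  "continuous_L1_approximable M a \<longleftrightarrow> a \<in> borel_measurable borel \<and> (\<exists>K. \<forall>x. \<bar>a x\<bar> \<le> K) \<and>
     (\<forall>e>0. \<exists>\<phi> K. continuous_on UNIV \<phi> \<and> (\<forall>x. \<bar>\<phi> x\<bar> \<le> K) \<and> (\<integral>x. \<bar>a x - \<phi> x\<bar> \<partial>M) < e)"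

lemma continuous_L1_approximableE:
  assumes "continuous_L1_approximable M a" "e > 0"
  obtains Ka \<phi> K where "a \<in> borel_measurable borel" "\<And>x. \<bar>a x\<bar> \<le> Ka"
    "continuous_on UNIV \<phi>" "\<And>x. \<bar>\<phi> x\<bar> \<le> K" "(\<integral>x. \<bar>a x - \<phi> x\<bar> \<partial>M) < e"
  using assms unfolding continuous_L1_approximable_def by blast

context
  fixes M :: "'a::polish_space measure"
  assumes M: "finite_measure M" "sets M = sets borel"
begin

lemma continuous_L1_approximable_add:
  assumes a: "continuous_L1_approximable M a" and b: "continuous_L1_approximable M b"
  shows "continuous_L1_approximable M (\<lambda>x. a x + b x)"
  unfolding continuous_L1_approximable_def
proof (intro conjI allI impI)
  fix e :: real assume e: "e > 0"
  obtain Ka \<phi> K1 where p: "a \<in> borel_measurable borel" "\<And>x. \<bar>a x\<bar> \<le> Ka" "continuous_on UNIV \<phi>"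
    "\<And>x. \<bar>\<phi> x\<bar> \<le> K1" "(\<integral>x. \<bar>a x - \<phi> x\<bar> \<partial>M) < e/2"
    by (rule continuous_L1_approximableE[OF a, of "e/2"]) (use e in auto)
  obtain Kb \<psi> K2 where q: "b \<in> borel_measurable borel" "\<And>x. \<bar>b x\<bar> \<le> Kb" "continuous_on UNIV \<psi>"
    "\<And>x. \<bar>\<psi> x\<bar> \<le> K2" "(\<integral>x. \<bar>b x - \<psi> x\<bar> \<partial>M) < e/2"
    by (rule continuous_L1_approximableE[OF b, of "e/2"]) (use e in auto)
  have "\<bar>a x - \<phi> x\<bar> \<le> Ka + K1" "\<bar>b x - \<psi> x\<bar> \<le> Kb + K2" for x
    using p(2,4)[of x] q(2,4)[of x] by arith+
  moreover have "(\<lambda>x. a x - \<phi> x) \<in> borel_measurable borel" "(\<lambda>x. b x - \<psi> x) \<in> borel_measurable borel"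
    using p q borel_measurable_continuous_onI[OF p(3)] borel_measurable_continuous_onI[OF q(3)] by auto
  ultimately have "(\<integral>x. \<bar>(a x - \<phi> x) + (b x - \<psi> x)\<bar> \<partial>M) \<le> (\<integral>x. \<bar>a x - \<phi> x\<bar> \<partial>M) + (\<integral>x. \<bar>b x - \<psi> x\<bar> \<partial>M)"
    by (intro integral_abs_add_le[OF M]) auto
  then have "(\<integral>x. \<bar>a x + b x - (\<phi> x + \<psi> x)\<bar> \<partial>M) < e"
    using p(5) q(5) by (simp add: algebra_simps)
  moreover have "\<bar>\<phi> x + \<psi> x\<bar> \<le> K1 + K2" for x
    using p(4)[of x] q(4)[of x] by arith
  ultimately show "\<exists>\<theta> K. continuous_on UNIV \<theta> \<and> (\<forall>x. \<bar>\<theta> x\<bar> \<le> K) \<and> (\<integral>x. \<bar>a x + b x - \<theta> x\<bar> \<partial>M) < e"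
    using p(3) q(3) by (intro exI[of _ "\<lambda>x. \<phi> x + \<psi> x"] exI[of _ "K1 + K2"]) (auto intro: continuous_on_add)
next
  show "(\<lambda>x. a x + b x) \<in> borel_measurable borel"
    using a b unfolding continuous_L1_approximable_def by (auto intro: borel_measurable_add)
  obtain Ka Kb where Ka: "\<And>x. \<bar>a x\<bar> \<le> Ka" and Kb: "\<And>x. \<bar>b x\<bar> \<le> Kb"
    using a b unfolding continuous_L1_approximable_def by blast
  have "\<bar>a x + b x\<bar> \<le> Ka + Kb" for x
    using Ka[of x] Kb[of x] by arith
  then show "\<exists>K. \<forall>x. \<bar>a x + b x\<bar> \<le> K" by blast
qed

lemma continuous_L1_approximable_cmult:
  assumes a: "continuous_L1_approximable M a"
  shows "continuous_L1_approximable M (\<lambda>x. r * a x)"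
  unfolding continuous_L1_approximable_def
proof (intro conjI allI impI)
  fix e :: real assume e: "e > 0"
  obtain Ka \<phi> K where p: "a \<in> borel_measurable borel" "\<And>x. \<bar>a x\<bar> \<le> Ka" "continuous_on UNIV \<phi>"
    "\<And>x. \<bar>\<phi> x\<bar> \<le> K" "(\<integral>x. \<bar>a x - \<phi> x\<bar> \<partial>M) < e / (\<bar>r\<bar> + 1)"
    by (rule continuous_L1_approximableE[OF a, of "e / (\<bar>r\<bar> + 1)"]) (use e in auto)
  have "(\<integral>x. \<bar>r * a x - r * \<phi> x\<bar> \<partial>M) = \<bar>r\<bar> * (\<integral>x. \<bar>a x - \<phi> x\<bar> \<partial>M)"
    by (simp add: abs_mult right_diff_distrib[symmetric])
  also have "\<dots> \<le> \<bar>r\<bar> * (e / (\<bar>r\<bar> + 1))"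
    using p(5) by (intro mult_left_mono) auto
  also have "\<dots> < e"
    using e by (simp add: field_simps)
  finally show "\<exists>\<theta> K. continuous_on UNIV \<theta> \<and> (\<forall>x. \<bar>\<theta> x\<bar> \<le> K) \<and> (\<integral>x. \<bar>r * a x - \<theta> x\<bar> \<partial>M) < e"
    using p(3,4)
    by (intro exI[of _ "\<lambda>x. r * \<phi> x"] exI[of _ "\<bar>r\<bar> * K"])
       (auto simp: abs_mult intro: mult_left_mono continuous_on_mult_left)
next
  obtain Ka where Ka: "\<And>x. \<bar>a x\<bar> \<le> Ka" and am: "a \<in> borel_measurable borel"
    using a unfolding continuous_L1_approximable_def by blast
  then show "(\<lambda>x. r * a x) \<in> borel_measurable borel" by simp
  show "\<exists>K. \<forall>x. \<bar>r * a x\<bar> \<le> K"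
    using Ka by (intro exI[of _ "\<bar>r\<bar> * Ka"]) (simp add: abs_mult mult_left_mono)
qed

lemma continuous_L1_approximable_sum:
  assumes "finite S" "\<And>k. k \<in> S \<Longrightarrow> continuous_L1_approximable M (f k)"
  shows "continuous_L1_approximable M (\<lambda>x. \<Sum>k\<in>S. f k x)"
  using assms
proof (induction S rule: finite_induct)
  case empty
  show ?case
    unfolding continuous_L1_approximable_def
    by (intro conjI allI impI exI[of _ "\<lambda>x. 0"] exI[of _ 0]) auto
next
  case (insert k S)
  then show ?case
    using continuous_L1_approximable_add[of "f k" "\<lambda>x. \<Sum>k\<in>S. f k x"] by simp
qed

lemma continuous_L1_approximable_indicator:
  assumes "A \<in> sets borel"
  shows "continuous_L1_approximable M (indicator A)"
  unfolding continuous_L1_approximable_def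
proof (intro conjI allI impI)
  fix e :: real assume "e > 0"
  then obtain \<phi> where "continuous_on UNIV \<phi>" "\<And>x. 0 \<le> \<phi> x \<and> \<phi> x \<le> 1"
    "(\<integral>x. \<bar>indicator A x - \<phi> x\<bar> \<partial>M) < e"
    using indicator_L1_approx_continuous[OF M assms] by blast
  then show "\<exists>\<phi> K. continuous_on UNIV \<phi> \<and> (\<forall>x. \<bar>\<phi> x\<bar> \<le> K) \<and> (\<integral>x. \<bar>indicator A x - \<phi> x\<bar> \<partial>M) < e"
    by (intro exI[of _ \<phi>] exI[of _ 1]) auto
qed (use assms in \<open>auto intro: exI[of _ 1]\<close>)

lemma continuous_L1_approximable_uniform_limit:
  assumes am: "a \<in> borel_measurable borel" and Ka: "\<And>x. \<bar>a x\<bar> \<le> Ka"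
    and unif: "\<And>d. d > 0 \<Longrightarrow> \<exists>b. continuous_L1_approximable M b \<and> (\<forall>x. \<bar>a x - b x\<bar> \<le> d)"
  shows "continuous_L1_approximable M a"
  unfolding continuous_L1_approximable_def
proof (intro conjI allI impI)
  interpret finite_measure M by (rule M(1))
  fix e :: real assume e: "e > 0"
  define m where "m = measure M (space M)"
  define d where "d = e / (2 * (m + 1))"
  have "0 \<le> m"
    unfolding m_def by simp
  then have d: "d > 0" "d * m < e / 2"
    using e unfolding d_def by (simp_all add: field_simps)
  obtain b where b: "continuous_L1_approximable M b" "\<And>x. \<bar>a x - b x\<bar> \<le> d"
    using unif[OF d(1)] by blast
  obtain Kb \<phi> K where p: "b \<in> borel_measurable borel" "\<And>x. \<bar>b x\<bar> \<le> Kb" "continuous_on UNIV \<phi>"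
    "\<And>x. \<bar>\<phi> x\<bar> \<le> K" "(\<integral>x. \<bar>b x - \<phi> x\<bar> \<partial>M) < e/2"
    by (rule continuous_L1_approximableE[OF b(1), of "e/2"]) (use e in auto)
  have ab: "(\<lambda>x. a x - b x) \<in> borel_measurable borel" and b\<phi>: "(\<lambda>x. b x - \<phi> x) \<in> borel_measurable borel"
    using am p borel_measurable_continuous_onI[OF p(3)] by auto
  have "\<bar>b x - \<phi> x\<bar> \<le> Kb + K" for x
    using p(2,4)[of x] by arith
  then have "(\<integral>x. \<bar>(a x - b x) + (b x - \<phi> x)\<bar> \<partial>M) \<le> (\<integral>x. \<bar>a x - b x\<bar> \<partial>M) + (\<integral>x. \<bar>b x - \<phi> x\<bar> \<partial>M)"
    using ab b\<phi> b(2) by (intro integral_abs_add_le[OF M]) auto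
  also have "(\<integral>x. \<bar>a x - b x\<bar> \<partial>M) \<le> (\<integral>x. d \<partial>M)"
    using ab b(2) by (intro integral_mono integrable_bounded_borel[OF M]) auto
  also have "(\<integral>x. d \<partial>M) = d * m"
    unfolding m_def by simp
  finally show "\<exists>\<phi> K. continuous_on UNIV \<phi> \<and> (\<forall>x. \<bar>\<phi> x\<bar> \<le> K) \<and> (\<integral>x. \<bar>a x - \<phi> x\<bar> \<partial>M) < e"
    using p(3,4,5) d(2) by (intro exI[of _ \<phi>] exI[of _ K]) auto
qed (use am Ka in auto)

lemma bounded_borel_continuous_L1_approximable:
  assumes am: "a \<in> borel_measurable borel" and Ka: "\<And>x. \<bar>a x\<bar> \<le> Ka"
  shows "continuous_L1_approximable M a"
proof (rule continuous_L1_approximable_uniform_limit[OF am Ka])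
  fix d :: real assume d: "d > 0"
  obtain n where "inverse (real (Suc n)) < d"
    using reals_Archimedean[OF d] by blast
  then obtain N :: nat where N: "N > 0" "1 / real N \<le> d"
    by (intro that[of "Suc n"]) (auto simp: inverse_eq_divide)
  define L :: int where "L = int N * \<lceil>Ka\<rceil> + 1"
  define g where "g x = \<lfloor>real N * a x\<rfloor>" for x
  define b where "b x = (\<Sum>k\<in>{-L..L}. (real_of_int k / real N) * indicator {x. g x = k} x)" for x
  have gL: "g x \<in> {-L..L}" for x
  proof -
    have "\<bar>real N * a x\<bar> \<le> real N * \<lceil>Ka\<rceil>"
      using Ka[of x] N(1) by (simp add: abs_mult) (meson le_of_int_ceiling mult_left_mono of_nat_0_le_iff order_trans)
    then have "- real_of_int (int N * \<lceil>Ka\<rceil>) \<le> real N * a x" "real N * a x \<le> real_of_int (int N * \<lceil>Ka\<rceil>)"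
      by (auto simp: abs_le_iff)
    then show ?thesis
      unfolding g_def L_def atLeastAtMost_iff le_floor_iff floor_le_iff by simp
  qed
  have b: "b x = real_of_int (g x) / real N" for x
  proof -
    have "b x = (\<Sum>k\<in>{-L..L}. if g x = k then real_of_int k / real N else 0)"
      unfolding b_def by (intro sum.cong) (auto simp: indicator_def)
    then show ?thesis
      using gL[of x] by (simp add: sum.delta')
  qed
  have "continuous_L1_approximable M b"
    unfolding b_def using am
    by (intro continuous_L1_approximable_sum continuous_L1_approximable_cmult
        continuous_L1_approximable_indicator) (auto simp: g_def)
  moreover have "\<bar>a x - b x\<bar> \<le> d" for x
  proof -
    have "real_of_int (g x) \<le> real N * a x" "real N * a x < real_of_int (g x) + 1"
      unfolding g_def by linarith+
    moreover have "a x - real_of_int (g x) / real N = (real N * a x - real_of_int (g x)) / real N"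
      using N(1) by (simp add: field_simps)
    ultimately have "\<bar>a x - real_of_int (g x) / real N\<bar> \<le> 1 / real N"
      by (simp add: divide_right_mono)
    then show ?thesis using N(2) b by simp
  qed
  ultimately show "\<exists>b. continuous_L1_approximable M b \<and> (\<forall>x. \<bar>a x - b x\<bar> \<le> d)" by blast
qed

end

lemma dist_closest_point_le_sum_Basis:
  fixes S :: "'u::euclidean_space set"
  assumes S: "convex S" "closed S" and v: "v \<in> S"
  shows "dist (closest_point S (\<Sum>b\<in>Basis. f b *\<^sub>R b)) v \<le> (\<Sum>b\<in>Basis. \<bar>v \<bullet> b - f b\<bar>)"
proof -
  have "dist (closest_point S (\<Sum>b\<in>Basis. f b *\<^sub>R b)) (closest_point S v) \<le> dist (\<Sum>b\<in>Basis. f b *\<^sub>R b) v"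
    using v by (intro closest_point_lipschitz[OF S]) auto
  then have "dist (closest_point S (\<Sum>b\<in>Basis. f b *\<^sub>R b)) v \<le> dist (\<Sum>b\<in>Basis. f b *\<^sub>R b) v"
    by (simp only: closest_point_self[OF v])
  also have "\<dots> \<le> (\<Sum>b\<in>Basis. \<bar>v \<bullet> b - f b\<bar>)"
    using norm_le_l1[of "(\<Sum>b\<in>Basis. f b *\<^sub>R b) - v"]
    by (simp add: dist_norm inner_diff_left inner_sum_left inner_Basis if_distrib
        sum.delta cong: if_cong) (simp add: abs_minus_commute)
  finally show ?thesis .
qed

lemma components_L1_approx_continuous:
  fixes M :: "'a::polish_space measure" and \<gamma> :: "'a \<Rightarrow> 'u::euclidean_space"
  assumes M: "finite_measure M" "sets M = sets borel"
    and \<gamma>: "\<gamma> \<in> borel_measurable borel" "\<And>y. norm (\<gamma> y) \<le> R" and e: "e > 0"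
  obtains \<phi> where "\<And>b. b \<in> Basis \<Longrightarrow> continuous_on UNIV (\<phi> b)"
    "\<And>b. b \<in> Basis \<Longrightarrow> integrable M (\<lambda>y. \<bar>\<gamma> y \<bullet> b - \<phi> b y\<bar>)"
    "\<And>b. b \<in> Basis \<Longrightarrow> (\<integral>y. \<bar>\<gamma> y \<bullet> b - \<phi> b y\<bar> \<partial>M) < e"
proof -
  have "\<forall>b\<in>Basis. \<exists>\<phi>. continuous_on UNIV \<phi> \<and> integrable M (\<lambda>y. \<bar>\<gamma> y \<bullet> b - \<phi> y\<bar>) \<and>
      (\<integral>y. \<bar>\<gamma> y \<bullet> b - \<phi> y\<bar> \<partial>M) < e"
  proof
    fix b :: 'u assume b: "b \<in> Basis"
    have bound: "\<bar>\<gamma> y \<bullet> b\<bar> \<le> R" for y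
      using Basis_le_norm[OF b, of "\<gamma> y"] \<gamma>(2)[of y] by linarith
    have meas: "(\<lambda>y. \<gamma> y \<bullet> b) \<in> borel_measurable borel"
      using \<gamma>(1) by measurable
    obtain \<phi> K where \<phi>: "continuous_on UNIV \<phi>" "\<And>y. \<bar>\<phi> y\<bar> \<le> K"
      "(\<integral>y. \<bar>\<gamma> y \<bullet> b - \<phi> y\<bar> \<partial>M) < e"
      by (rule continuous_L1_approximableE[OF bounded_borel_continuous_L1_approximable[OF M meas bound] e])
        blast
    have "integrable M (\<lambda>y. \<bar>\<gamma> y \<bullet> b - \<phi> y\<bar>)"
    proof (rule integrable_bounded_borel[OF M, where K="R + K"])
      show "(\<lambda>y. \<bar>\<gamma> y \<bullet> b - \<phi> y\<bar>) \<in> borel_measurable borel"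
        using meas borel_measurable_continuous_onI[OF \<phi>(1)] by measurable
      show "\<bar>\<bar>\<gamma> y \<bullet> b - \<phi> y\<bar>\<bar> \<le> R + K" for y
        using bound[of y] \<phi>(2)[of y] by arith
    qed
    then show "\<exists>\<phi>. continuous_on UNIV \<phi> \<and> integrable M (\<lambda>y. \<bar>\<gamma> y \<bullet> b - \<phi> y\<bar>) \<and>
        (\<integral>y. \<bar>\<gamma> y \<bullet> b - \<phi> y\<bar> \<partial>M) < e"
      using \<phi>(1,3) by blast
  qed
  then obtain \<phi> where "\<forall>b\<in>Basis. continuous_on UNIV (\<phi> b) \<and>
      integrable M (\<lambda>y. \<bar>\<gamma> y \<bullet> b - \<phi> b y\<bar>) \<and> (\<integral>y. \<bar>\<gamma> y \<bullet> b - \<phi> b y\<bar> \<partial>M) < e"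
    by (auto dest!: bchoice)
  then show ?thesis
    by (intro that) auto
qed

lemma L1_approx_continuous_into_convex:
  fixes M :: "'a::polish_space measure" and S :: "'u::euclidean_space set" and \<gamma> :: "'a \<Rightarrow> 'u"
  assumes M: "finite_measure M" "sets M = sets borel"
    and S: "compact S" "convex S" "S \<noteq> {}"
    and \<gamma>: "\<gamma> \<in> borel_measurable borel" "\<And>y. \<gamma> y \<in> S" and e: "e > 0"
  obtains h where "continuous_on UNIV h" "\<And>y. h y \<in> S" "(\<integral>y. dist (h y) (\<gamma> y) \<partial>M) < e"
proof -
  obtain R where R: "\<And>u. u \<in> S \<Longrightarrow> norm u \<le> R"
    using compact_imp_bounded[OF S(1)] unfolding bounded_iff by blast
  have cS: "closed S"
    using S(1) compact_imp_closed by blast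
  define e' where "e' = e / real DIM('u)"
  obtain \<phi> where \<phi>: "\<And>b. b \<in> Basis \<Longrightarrow> continuous_on UNIV (\<phi> b)"
    "\<And>b. b \<in> Basis \<Longrightarrow> integrable M (\<lambda>y. \<bar>\<gamma> y \<bullet> b - \<phi> b y\<bar>)"
    "\<And>b. b \<in> Basis \<Longrightarrow> (\<integral>y. \<bar>\<gamma> y \<bullet> b - \<phi> b y\<bar> \<partial>M) < e'"
    using components_L1_approx_continuous[OF M \<gamma>(1) R[OF \<gamma>(2)], of e'] e unfolding e'_def by auto
  define h where "h y = closest_point S (\<Sum>b\<in>Basis. \<phi> b y *\<^sub>R b)" for y
  have hc: "continuous_on UNIV h"
    unfolding h_def using \<phi>(1)
    by (intro continuous_on_compose2[OF continuous_on_closest_point[OF S(2) cS S(3)]]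
        continuous_intros) auto
  have hS: "h y \<in> S" for y
    unfolding h_def by (rule closest_point_in_set[OF cS S(3)])
  have "dist (h y) (\<gamma> y) \<le> (\<Sum>b\<in>Basis. \<bar>\<gamma> y \<bullet> b - \<phi> b y\<bar>)" for y
    unfolding h_def by (rule dist_closest_point_le_sum_Basis[OF S(2) cS \<gamma>(2)])
  then have "(\<integral>y. dist (h y) (\<gamma> y) \<partial>M) \<le> (\<integral>y. (\<Sum>b\<in>Basis. \<bar>\<gamma> y \<bullet> b - \<phi> b y\<bar>) \<partial>M)"
    using \<phi>(2) by (intro integral_mono' integrable_sum) (auto intro: sum_nonneg)
  also have "\<dots> = (\<Sum>b\<in>Basis. (\<integral>y. \<bar>\<gamma> y \<bullet> b - \<phi> b y\<bar> \<partial>M))"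
    using \<phi>(2) by (simp add: integral_sum)
  also have "\<dots> < (\<Sum>b\<in>(Basis::'u set). e')"
    using \<phi>(3) by (intro sum_strict_mono) auto
  also have "\<dots> = e"
    unfolding e'_def by simp
  finally show ?thesis
    using hc hS by (intro that)
qed

section \<open>Modulus of continuity of the cost in the actions\<close>

definition countable_dense_subset :: "'v::{metric_space,second_countable_topology} set \<Rightarrow> 'v set" where
  "countable_dense_subset P = (SOME D. countable D \<and> D \<subseteq> P \<and> P \<subseteq> closure D)"

lemma countable_dense_subset:
  "countable (countable_dense_subset P)" "countable_dense_subset P \<subseteq> P"
  "P \<subseteq> closure (countable_dense_subset P)"
proof -
  obtain D where "countable D" "D \<subseteq> P" "P \<subseteq> closure D"
    by (rule separable)
  then have "\<exists>D. countable D \<and> D \<subseteq> P \<and> P \<subseteq> closure D" by blast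
  from someI_ex[OF this] show "countable (countable_dense_subset P)"
    "countable_dense_subset P \<subseteq> P" "P \<subseteq> closure (countable_dense_subset P)"
    unfolding countable_dense_subset_def by auto
qed

lemma finite_partition_of_unity_balls:
  fixes P :: "'v::metric_space set"
  assumes P: "compact P" and \<delta>: "\<delta> > 0"
  obtains N and p :: "'v \<Rightarrow> 'v \<Rightarrow> real"
  where "finite N" "N \<subseteq> P" "\<And>w. continuous_on P (p w)" "\<And>w u. 0 \<le> p w u"
    "\<And>u. u \<in> P \<Longrightarrow> (\<Sum>w\<in>N. p w u) = 1" "\<And>w u. p w u \<noteq> 0 \<Longrightarrow> dist u w < \<delta>"
proof -
  obtain N where N: "N \<subseteq> P" "finite N" "P \<subseteq> (\<Union>w\<in>N. ball w \<delta>)"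
    using compactE_image[OF P, of P "\<lambda>w. ball w \<delta>"] \<delta> by force
  define \<psi> where "\<psi> w u = max 0 (\<delta> - dist u w)" for w u :: 'v
  define S where "S u = (\<Sum>w\<in>N. \<psi> w u)" for u
  have S_pos: "S u > 0" if u: "u \<in> P" for u
  proof -
    obtain w where "w \<in> N" "dist w u < \<delta>"
      using N(3) u by force
    then show ?thesis
      unfolding S_def \<psi>_def using N(2) by (intro sum_pos2) (auto simp: dist_commute)
  qed
  show ?thesis
  proof (rule that[OF N(2,1), of "\<lambda>w u. \<psi> w u / S u"])
    show "continuous_on P (\<lambda>u. \<psi> w u / S u)" for w
      using S_pos unfolding S_def \<psi>_def by (intro continuous_intros) force
    show "0 \<le> \<psi> w u / S u" for w u
      unfolding S_def \<psi>_def by (simp add: sum_nonneg)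
    show "(\<Sum>w\<in>N. \<psi> w u / S u) = 1" if "u \<in> P" for u
      using S_pos[OF that] by (simp add: sum_divide_distrib[symmetric] S_def)
    show "dist u w < \<delta>" if "\<psi> w u / S u \<noteq> 0" for w u
      using that unfolding \<psi>_def by (auto simp: max_def split: if_splits)
  qed
qed

text \<open>Taking the supremum over a countable dense set of actions makes the modulus measurable in
  the state; by continuity in the actions it still bounds the oscillation of the cost over all
  pairs of actions in \<open>P\<close> at distance below \<open>\<delta>\<close>.\<close>

definition action_modulus ::
  "('x \<times> 'v::{metric_space,second_countable_topology} \<Rightarrow> real) \<Rightarrow> 'v set \<Rightarrow> 'x \<Rightarrow> real \<Rightarrow> real" where
  "action_modulus c P x \<delta> = (SUP p\<in>{p\<in>countable_dense_subset P \<times> countable_dense_subset P.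
      dist (fst p) (snd p) < \<delta>}. \<bar>c (x, fst p) - c (x, snd p)\<bar>)"

locale cost_continuous_in_actions =
  fixes c :: "'x::topological_space \<times> 'v::{metric_space,second_countable_topology} \<Rightarrow> real"
    and P :: "'v set" and B :: real
  assumes borel_measurable_cost: "c \<in> borel_measurable borel"
    and cost_bounded: "\<And>x u. u \<in> P \<Longrightarrow> \<bar>c (x, u)\<bar> \<le> B"
    and compact_actions: "compact P" and actions_nonempty: "P \<noteq> {}"
    and cost_continuous: "\<And>x. continuous_on P (\<lambda>u. c (x, u))"
begin

abbreviation "dense_actions \<equiv> countable_dense_subset P"

abbreviation "close_pairs \<delta> \<equiv> {p\<in>dense_actions \<times> dense_actions. dist (fst p) (snd p) < \<delta>}"

lemma close_pairs_nonempty: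
  assumes "\<delta> > 0"
  shows "close_pairs \<delta> \<noteq> {}"
proof -
  obtain d where "d \<in> dense_actions"
    using countable_dense_subset(3)[of P] actions_nonempty by fastforce
  then have "(d, d) \<in> close_pairs \<delta>"
    using assms by simp
  then show ?thesis by blast
qed

lemma close_pairs_cost_bounded:
  assumes "p \<in> close_pairs \<delta>"
  shows "\<bar>c (x, fst p) - c (x, snd p)\<bar> \<le> 2 * B"
proof -
  have "fst p \<in> P" "snd p \<in> P"
    using assms countable_dense_subset(2)[of P] by auto
  then show ?thesis
    using cost_bounded[of "fst p" x] cost_bounded[of "snd p" x] by arith
qed

lemma bdd_above_close_pairs_cost:
  "bdd_above ((\<lambda>p. \<bar>c (x, fst p) - c (x, snd p)\<bar>) ` close_pairs \<delta>)"
  using close_pairs_cost_bounded by (intro bdd_aboveI2) blast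

lemma action_modulus_nonneg:
  assumes "\<delta> > 0"
  shows "0 \<le> action_modulus c P x \<delta>"
proof -
  obtain p where "p \<in> close_pairs \<delta>"
    using close_pairs_nonempty[OF assms] by blast
  then show ?thesis
    unfolding action_modulus_def by (rule cSUP_upper2[OF bdd_above_close_pairs_cost]) simp
qed

lemma action_modulus_le: "\<delta> > 0 \<Longrightarrow> action_modulus c P x \<delta> \<le> 2 * B"
  unfolding action_modulus_def
  by (rule cSUP_least[OF close_pairs_nonempty close_pairs_cost_bounded])

lemma borel_measurable_cost_slice: "(\<lambda>x. c (x, u)) \<in> borel_measurable borel"
  using measurable_comp[OF borel_measurable_continuous_onI[OF continuous_on_Pair[OF continuous_on_id continuous_on_const]]
      borel_measurable_cost]
  by (simp add: comp_def)

lemma borel_measurable_action_modulus: "(\<lambda>x. action_modulus c P x \<delta>) \<in> borel_measurable borel"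
  unfolding action_modulus_def
proof (rule borel_measurable_cSUP)
  show "countable (close_pairs \<delta>)"
    using countable_dense_subset(1)[of P] by (intro countable_subset[OF _ countable_SIGMA]) auto
  show "(\<lambda>x. \<bar>c (x, fst p) - c (x, snd p)\<bar>) \<in> borel_measurable borel" for p
    using borel_measurable_cost_slice[of "fst p"] borel_measurable_cost_slice[of "snd p"] by measurable
qed (rule bdd_above_close_pairs_cost)

lemma action_modulus_bound:
  assumes u: "u \<in> P" and v: "v \<in> P" and uv: "dist u v < \<delta>"
  shows "\<bar>c (x, u) - c (x, v)\<bar> \<le> action_modulus c P x \<delta>"
proof -
  have "u \<in> closure dense_actions" "v \<in> closure dense_actions"
    using countable_dense_subset(3)[of P] u v by blast+
  then obtain X Y where X: "\<And>n. X n \<in> dense_actions" "X \<longlonglongrightarrow> u"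
    and Y: "\<And>n. Y n \<in> dense_actions" "Y \<longlonglongrightarrow> v"
    unfolding closure_sequential by blast
  have XY: "X n \<in> P" "Y n \<in> P" for n
    using X(1) Y(1) countable_dense_subset(2)[of P] by auto
  have "(\<lambda>n. \<bar>c (x, X n) - c (x, Y n)\<bar>) \<longlonglongrightarrow> \<bar>c (x, u) - c (x, v)\<bar>"
    using XY by (intro tendsto_intros continuous_on_tendsto_compose[OF cost_continuous] X(2) Y(2) u v) auto
  moreover have "(\<lambda>n. dist (X n) (Y n)) \<longlonglongrightarrow> dist u v"
    by (rule tendsto_dist[OF X(2) Y(2)])
  then have "eventually (\<lambda>n. dist (X n) (Y n) < \<delta>) sequentially"
    using uv by (rule order_tendstoD(2))
  then have "eventually (\<lambda>n. \<bar>c (x, X n) - c (x, Y n)\<bar> \<le> action_modulus c P x \<delta>) sequentially"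
    unfolding action_modulus_def
  proof eventually_elim
    case (elim n)
    then have "(X n, Y n) \<in> close_pairs \<delta>"
      using X(1) Y(1) by simp
    then show ?case
      by (rule cSUP_upper2[OF bdd_above_close_pairs_cost]) simp
  qed
  ultimately show ?thesis
    by (rule tendsto_upperbound) simp
qed

lemma cost_bound_nonneg: "0 \<le> B"
  using actions_nonempty cost_bounded abs_ge_zero order_trans by blast

lemma cost_diff_le_action_modulus:
  assumes u: "u \<in> P" and v: "v \<in> P" and \<delta>: "\<delta> > 0"
  shows "\<bar>c (x, u) - c (x, v)\<bar> \<le> action_modulus c P x \<delta> + 2 * B / \<delta> * dist u v"
proof (cases "dist u v < \<delta>")
  case True
  have "0 \<le> 2 * B / \<delta> * dist u v"
    using \<delta> cost_bound_nonneg by simp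
  then show ?thesis
    using action_modulus_bound[OF u v True, of x] by linarith
next
  case False
  have "\<bar>c (x, u) - c (x, v)\<bar> \<le> 2 * B * 1"
    using cost_bounded[OF u, of x] cost_bounded[OF v, of x] by arith
  also have "\<dots> \<le> 2 * B * (dist u v / \<delta>)"
    using False \<delta> cost_bound_nonneg by (intro mult_left_mono) auto
  finally show ?thesis
    using action_modulus_nonneg[OF \<delta>, of x] by simp
qed

lemma action_modulus_tendsto_0: "(\<lambda>k. action_modulus c P x (1 / Suc k)) \<longlonglongrightarrow> 0"
proof (rule LIMSEQ_I)
  fix e :: real assume e: "e > 0"
  have "uniformly_continuous_on P (\<lambda>u. c (x, u))"
    by (rule compact_uniformly_continuous[OF cost_continuous compact_actions])
  then obtain d where d: "d > 0" "\<And>u v. u \<in> P \<Longrightarrow> v \<in> P \<Longrightarrow> dist v u < d \<Longrightarrow> dist (c (x, v)) (c (x, u)) < e/2"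
    using e unfolding uniformly_continuous_on_def by (meson half_gt_zero)
  obtain k0 where k0: "inverse (real (Suc k0)) < d"
    using reals_Archimedean[OF d(1)] by blast
  show "\<exists>k0. \<forall>k\<ge>k0. norm (action_modulus c P x (1 / Suc k) - 0) < e"
  proof (intro exI[of _ k0] allI impI)
    fix k assume k: "k0 \<le> k"
    have "1 / real (Suc k) \<le> 1 / real (Suc k0)"
      using k by (intro divide_left_mono) auto
    then have "1 / real (Suc k) < d"
      using k0 by (simp add: inverse_eq_divide)
    have "\<bar>c (x, fst p) - c (x, snd p)\<bar> \<le> e/2" if p: "p \<in> close_pairs (1 / Suc k)" for p
    proof -
      have "fst p \<in> P" "snd p \<in> P" "dist (fst p) (snd p) < d"
        using p countable_dense_subset(2)[of P] \<open>1 / real (Suc k) < d\<close> by auto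
      then show ?thesis
        using d(2)[of "snd p" "fst p"] by (simp add: dist_real_def)
    qed
    then have "action_modulus c P x (1 / Suc k) \<le> e/2"
      unfolding action_modulus_def by (intro cSUP_least[OF close_pairs_nonempty]) auto
    then show "norm (action_modulus c P x (1 / Suc k) - 0) < e"
      using action_modulus_nonneg[of "1 / Suc k" x] e by simp
  qed
qed

lemma integral_action_modulus_small:
  fixes N :: "'x measure"
  assumes N: "finite_measure N" "sets N = sets borel" and e: "e > 0"
  obtains \<delta> where "\<delta> > 0" "(\<integral>x. action_modulus c P x \<delta> \<partial>N) < e"
proof -
  interpret finite_measure N by (rule N(1))
  have meas: "(\<lambda>x. action_modulus c P x \<delta>) \<in> borel_measurable N" for \<delta>
    using borel_measurable_action_modulus measurable_cong_sets[OF N(2) refl] by blast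
  have "(\<lambda>k. (\<integral>x. action_modulus c P x (1 / Suc k) \<partial>N)) \<longlonglongrightarrow> (\<integral>x. 0 \<partial>N)"
    using meas action_modulus_nonneg action_modulus_le action_modulus_tendsto_0
    by (intro integral_dominated_convergence[where w="\<lambda>_. 2 * B"]) auto
  then have "eventually (\<lambda>k. (\<integral>x. action_modulus c P x (1 / Suc k) \<partial>N) < e) sequentially"
    using e by (intro order_tendstoD(2)) auto
  then obtain k where "(\<integral>x. action_modulus c P x (1 / Suc k) \<partial>N) < e"
    unfolding eventually_sequentially by blast
  then show ?thesis
    by (intro that[of "1 / Suc k"]) auto
qed

lemma cost_partition_of_unity_approx:
  assumes N: "finite N" "N \<subseteq> P" and p: "\<And>w u. 0 \<le> p w u" "(\<Sum>w\<in>N. p w u) = 1"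
    "\<And>w. p w u \<noteq> 0 \<Longrightarrow> dist u w < \<delta>" and u: "u \<in> P"
  shows "\<bar>c (x, u) - (\<Sum>w\<in>N. c (x, w) * p w u)\<bar> \<le> action_modulus c P x \<delta>"
proof -
  have "\<bar>c (x, u) - (\<Sum>w\<in>N. c (x, w) * p w u)\<bar> = \<bar>\<Sum>w\<in>N. (c (x, u) - c (x, w)) * p w u\<bar>"
    using p(2) by (simp add: left_diff_distrib sum_subtractf sum_distrib_left[symmetric])
  also have "\<dots> \<le> (\<Sum>w\<in>N. action_modulus c P x \<delta> * p w u)"
  proof (rule order_trans[OF sum_abs sum_mono])
    fix w assume "w \<in> N"
    show "\<bar>(c (x, u) - c (x, w)) * p w u\<bar> \<le> action_modulus c P x \<delta> * p w u"
    proof (cases "p w u = 0")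
      case False
      then have "\<bar>c (x, u) - c (x, w)\<bar> \<le> action_modulus c P x \<delta>"
        using action_modulus_bound[OF u] p(3) N(2) \<open>w \<in> N\<close> by blast
      then show ?thesis
        using p(1)[of w u] by (simp add: abs_mult mult_right_mono)
    qed simp
  qed
  also have "\<dots> = action_modulus c P x \<delta>"
    using p(2) by (simp add: sum_distrib_left[symmetric])
  finally show ?thesis .
qed

end

section \<open>Information structures\<close>

lemma borel_measurable_fst_borel:
  "(fst :: 'a::topological_space \<times> 'b::topological_space \<Rightarrow> 'a) \<in> borel_measurable borel"
  by (intro borel_measurable_continuous_onI continuous_on_fst continuous_on_id)

lemma borel_measurable_snd_borel:
  "(snd :: 'a::topological_space \<times> 'b::topological_space \<Rightarrow> 'b) \<in> borel_measurable borel"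
  by (intro borel_measurable_continuous_onI continuous_on_snd continuous_on_id)

lemma borel_measurable_snd_apply:
  "(\<lambda>z::'x::topological_space \<times> ('i \<Rightarrow> 'y::topological_space). snd z i) \<in> borel_measurable borel"
  by (rule borel_measurable_continuous_onI, rule continuous_on_product_then_coordinatewise)
    (rule continuous_on_snd[OF continuous_on_id])

lemma borel_measurable_info_structure:
  "info_structure \<mu> \<Longrightarrow> f \<in> borel_measurable borel \<Longrightarrow> f \<in> borel_measurable \<mu>"
  unfolding info_structure_def using measurable_cong_sets by blast

lemma integrable_bounded_info_structure:
  fixes f :: "'a::topological_space \<times> 'b::topological_space \<Rightarrow> real"
  assumes "info_structure \<mu>" "f \<in> borel_measurable borel" "\<And>z. \<bar>f z\<bar> \<le> K"
  shows "integrable \<mu> f"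
  using assms(1) unfolding info_structure_def prob_space_def
  by (intro integrable_bounded_borel[OF _ _ assms(2,3)]) auto

lemma prob_space_marginal:
  "info_structure \<mu> \<Longrightarrow> f \<in> borel_measurable borel \<Longrightarrow> prob_space (distr \<mu> borel f)"
  using borel_measurable_info_structure[of \<mu> f] prob_space.prob_space_distr[of \<mu> f borel]
  unfolding info_structure_def by blast

lemma finite_measure_marginal:
  "info_structure \<mu> \<Longrightarrow> f \<in> borel_measurable borel \<Longrightarrow> finite_measure (distr \<mu> borel f)"
  using prob_space_marginal[of \<mu> f] unfolding prob_space_def by blast

lemma integral_marginal:
  fixes a :: "'b::topological_space \<Rightarrow> real"
  assumes "info_structure \<mu>" "f \<in> borel_measurable borel" "a \<in> borel_measurable borel"
  shows "(\<integral>z. a (f z) \<partial>\<mu>) = (\<integral>y. a y \<partial>distr \<mu> borel f)"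
  by (simp add: integral_distr[OF borel_measurable_info_structure[OF assms(1,2)] assms(3)])

lemma finite_measure_prior: "info_structure \<mu> \<Longrightarrow> finite_measure (prior \<mu>)"
  unfolding prior_def by (rule finite_measure_marginal[OF _ borel_measurable_fst_borel])

lemma sets_prior: "sets (prior \<mu>) = sets borel"
  unfolding prior_def by simp

lemma integrable_fst_mult_snd:
  fixes \<mu> :: "('x::topological_space \<times> 'z::topological_space) measure"
    and a :: "'x \<Rightarrow> real" and b :: "'z \<Rightarrow> real"
  assumes \<mu>: "info_structure \<mu>"
    and a: "a \<in> borel_measurable borel" "\<And>x. \<bar>a x\<bar> \<le> Ka"
    and b: "b \<in> borel_measurable borel" "\<And>z. \<bar>b z\<bar> \<le> Kb"
  shows "integrable \<mu> (\<lambda>z. a (fst z) * b (snd z))"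
proof (rule integrable_bounded_info_structure[OF \<mu>, where K="Ka * Kb"])
  have "(\<lambda>z. a (fst z)) \<in> borel_measurable borel" "(\<lambda>z. b (snd z)) \<in> borel_measurable borel"
    using measurable_comp[OF borel_measurable_fst_borel a(1)] measurable_comp[OF borel_measurable_snd_borel b(1)]
    by (simp_all add: comp_def)
  then show "(\<lambda>z. a (fst z) * b (snd z)) \<in> borel_measurable borel"
    by (rule borel_measurable_times)
  show "\<bar>a (fst z) * b (snd z)\<bar> \<le> Ka * Kb" for z
    unfolding abs_mult using a(2) b(2) by (rule mult_mono') auto
qed

lemma integral_fst_mult_snd_diff_le:
  fixes \<mu> :: "('x::topological_space \<times> 'z::topological_space) measure"
    and a \<phi> :: "'x \<Rightarrow> real" and b :: "'z \<Rightarrow> real"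
  assumes \<mu>: "info_structure \<mu>"
    and a: "a \<in> borel_measurable borel" "\<And>x. \<bar>a x\<bar> \<le> Ka"
    and \<phi>: "\<phi> \<in> borel_measurable borel" "\<And>x. \<bar>\<phi> x\<bar> \<le> K\<phi>"
    and b: "b \<in> borel_measurable borel" "\<And>z. \<bar>b z\<bar> \<le> Kb"
  shows "\<bar>(\<integral>z. a (fst z) * b (snd z) \<partial>\<mu>) - (\<integral>z. \<phi> (fst z) * b (snd z) \<partial>\<mu>)\<bar>
    \<le> Kb * (\<integral>x. \<bar>a x - \<phi> x\<bar> \<partial>prior \<mu>)"
proof -
  have a\<phi>: "(\<lambda>x. a x - \<phi> x) \<in> borel_measurable borel" "\<And>x. \<bar>a x - \<phi> x\<bar> \<le> Ka + K\<phi>"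
    using a \<phi> by (auto intro: abs_triangle_ineq4[THEN order_trans] add_mono)
  then have a\<phi>_abs: "(\<lambda>x. \<bar>a x - \<phi> x\<bar>) \<in> borel_measurable borel" "\<And>x. \<bar>\<bar>a x - \<phi> x\<bar>\<bar> \<le> Ka + K\<phi>"
    by auto
  have "\<bar>(\<integral>z. a (fst z) * b (snd z) \<partial>\<mu>) - (\<integral>z. \<phi> (fst z) * b (snd z) \<partial>\<mu>)\<bar>
      = \<bar>\<integral>z. (a (fst z) - \<phi> (fst z)) * b (snd z) \<partial>\<mu>\<bar>"
    using integrable_fst_mult_snd[OF \<mu> a b] integrable_fst_mult_snd[OF \<mu> \<phi> b]
    by (simp add: left_diff_distrib)
  also have "\<dots> \<le> (\<integral>z. \<bar>(a (fst z) - \<phi> (fst z)) * b (snd z)\<bar> \<partial>\<mu>)"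
    by (rule integral_abs_bound)
  also have "\<dots> \<le> (\<integral>z. Kb * \<bar>a (fst z) - \<phi> (fst z)\<bar> \<partial>\<mu>)"
  proof (rule integral_mono)
    show "integrable \<mu> (\<lambda>z. \<bar>(a (fst z) - \<phi> (fst z)) * b (snd z)\<bar>)"
      using integrable_fst_mult_snd[OF \<mu> a\<phi> b] by simp
    show "integrable \<mu> (\<lambda>z. Kb * \<bar>a (fst z) - \<phi> (fst z)\<bar>)"
      using integrable_fst_mult_snd[OF \<mu> a\<phi>_abs, of "\<lambda>_. Kb" "\<bar>Kb\<bar>"] by (simp add: mult.commute)
    show "\<bar>(a (fst z) - \<phi> (fst z)) * b (snd z)\<bar> \<le> Kb * \<bar>a (fst z) - \<phi> (fst z)\<bar>" for z
      using mult_right_mono[OF b(2)[of "snd z"] abs_ge_zero[of "a (fst z) - \<phi> (fst z)"]]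
      by (simp add: abs_mult mult.commute)
  qed
  also have "\<dots> = Kb * (\<integral>x. \<bar>a x - \<phi> x\<bar> \<partial>prior \<mu>)"
    unfolding prior_def by (simp add: integral_marginal[OF \<mu> borel_measurable_fst_borel a\<phi>_abs(1)])
  finally show ?thesis .
qed

lemma tendsto_of_uniform_approx:
  fixes f :: "nat \<Rightarrow> real"
  assumes approx: "\<And>e. e > 0 \<Longrightarrow> \<exists>g l. g \<longlonglongrightarrow> l \<and> (\<forall>m. \<bar>f m - g m\<bar> \<le> e) \<and> \<bar>L - l\<bar> \<le> e"
  shows "f \<longlonglongrightarrow> L"
proof (rule LIMSEQ_I)
  fix r :: real assume r: "r > 0"
  then obtain g l where g: "g \<longlonglongrightarrow> l" "\<And>m. \<bar>f m - g m\<bar> \<le> r/4" "\<bar>L - l\<bar> \<le> r/4"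
    using approx[of "r/4"] by auto
  obtain m0 where m0: "\<And>m. m \<ge> m0 \<Longrightarrow> norm (g m - l) < r/4"
    using LIMSEQ_D[OF g(1), of "r/4"] r by auto
  have "norm (f m - L) < r" if "m \<ge> m0" for m
    using g(2)[of m] g(3) m0[OF that] unfolding real_norm_def by arith
  then show "\<exists>m0. \<forall>m\<ge>m0. norm (f m - L) < r"
    by blast
qed

lemma tendsto_integral_fst_mult_snd_fixed_prior:
  fixes \<mu>s :: "nat \<Rightarrow> ('x::polish_space \<times> 'z::polish_space) measure" and \<mu>
    and a :: "'x \<Rightarrow> real" and b :: "'z \<Rightarrow> real"
  assumes \<mu>s: "\<And>m. info_structure (\<mu>s m)" and \<mu>: "info_structure \<mu>"
    and prior: "\<And>m. prior (\<mu>s m) = prior \<mu>" and conv: "weak_conv_seq \<mu>s \<mu>"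
    and a: "a \<in> borel_measurable borel" "\<And>x. \<bar>a x\<bar> \<le> Ka"
    and b: "continuous_on UNIV b" "\<And>z. \<bar>b z\<bar> \<le> Kb"
  shows "(\<lambda>m. \<integral>z. a (fst z) * b (snd z) \<partial>\<mu>s m) \<longlonglongrightarrow> (\<integral>z. a (fst z) * b (snd z) \<partial>\<mu>)"
proof (rule tendsto_of_uniform_approx)
  fix e :: real assume e: "e > 0"
  have Kb: "0 \<le> Kb"
    using b(2) abs_ge_zero order_trans by blast
  have bm: "b \<in> borel_measurable borel"
    using b(1) by (rule borel_measurable_continuous_onI)
  have "e / (Kb + 1) > 0"
    using e Kb by simp
  then obtain \<phi> K where \<phi>: "continuous_on UNIV \<phi>" "\<And>x. \<bar>\<phi> x\<bar> \<le> K"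
      "(\<integral>x. \<bar>a x - \<phi> x\<bar> \<partial>prior \<mu>) < e / (Kb + 1)"
    by (rule continuous_L1_approximableE[OF bounded_borel_continuous_L1_approximable[OF
          finite_measure_prior[OF \<mu>] sets_prior a]]) blast
  have \<phi>m: "\<phi> \<in> borel_measurable borel"
    using \<phi>(1) by (rule borel_measurable_continuous_onI)
  have close: "\<bar>(\<integral>z. a (fst z) * b (snd z) \<partial>M) - (\<integral>z. \<phi> (fst z) * b (snd z) \<partial>M)\<bar> \<le> e"
    if M: "info_structure M" "prior M = prior \<mu>" for M :: "('x \<times> 'z) measure"
  proof -
    have "\<bar>(\<integral>z. a (fst z) * b (snd z) \<partial>M) - (\<integral>z. \<phi> (fst z) * b (snd z) \<partial>M)\<bar>
        \<le> Kb * (\<integral>x. \<bar>a x - \<phi> x\<bar> \<partial>prior \<mu>)"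
      using integral_fst_mult_snd_diff_le[OF M(1) a \<phi>m \<phi>(2) bm b(2)] M(2) by simp
    also have "\<dots> \<le> Kb * (e / (Kb + 1))"
      using \<phi>(3) Kb by (intro mult_left_mono) auto
    also have "\<dots> \<le> e"
      using e Kb by (simp add: field_simps)
    finally show ?thesis .
  qed
  have "continuous_on UNIV (\<lambda>z::'x \<times> 'z. \<phi> (fst z) * b (snd z))"
    by (intro continuous_on_mult continuous_on_compose2[OF \<phi>(1) continuous_on_fst]
        continuous_on_compose2[OF b(1) continuous_on_snd] continuous_on_id) auto
  moreover have "bounded (range (\<lambda>z::'x \<times> 'z. \<phi> (fst z) * b (snd z)))"
    unfolding bounded_iff using \<phi>(2) b(2)
    by (intro exI[of _ "K * Kb"]) (auto simp: abs_mult intro: mult_mono')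
  ultimately have "(\<lambda>m. \<integral>z. \<phi> (fst z) * b (snd z) \<partial>\<mu>s m) \<longlonglongrightarrow> (\<integral>z. \<phi> (fst z) * b (snd z) \<partial>\<mu>)"
    using conv unfolding weak_conv_seq_def by blast
  then show "\<exists>g l. g \<longlonglongrightarrow> l \<and> (\<forall>m. \<bar>(\<integral>z. a (fst z) * b (snd z) \<partial>\<mu>s m) - g m\<bar> \<le> e) \<and>
      \<bar>(\<integral>z. a (fst z) * b (snd z) \<partial>\<mu>) - l\<bar> \<le> e"
    using close[OF \<mu>s prior] close[OF \<mu> refl] by blast
qed

section \<open>Team problems\<close>

lemma dist_fun_le_sum:
  fixes u v :: "'i::finite \<Rightarrow> 'u::metric_space"
  shows "dist u v \<le> 2 * (\<Sum>i\<in>UNIV. dist (u i) (v i))"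
proof -
  define S where "S = (\<Sum>i\<in>UNIV. dist (u i) (v i))"
  have geom: "summable (\<lambda>n. (1/2::real)^n)"
    by (rule summable_geometric) simp
  have term_le: "(1/2)^n * min (dist (u (from_nat n)) (v (from_nat n))) 1 \<le> (1/2)^n * S" for n
    unfolding S_def by (intro mult_left_mono min.coboundedI1 member_le_sum) auto
  have "dist u v = (\<Sum>n. (1/2)^n * min (dist (u (from_nat n)) (v (from_nat n))) 1)"
    unfolding dist_fun_def ..
  also have "\<dots> \<le> (\<Sum>n. (1/2::real)^n * S)"
  proof (rule suminf_le[OF term_le _ summable_mult2[OF geom]])
    show "summable (\<lambda>n. (1/2::real)^n * min (dist (u (from_nat n)) (v (from_nat n))) 1)"
      by (rule summable_comparison_test'[OF geom, of 0]) (auto simp: abs_mult)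
  qed
  also have "\<dots> = 2 * S"
    using suminf_mult2[OF geom, of S] suminf_geometric[of "1/2::real"] by simp
  finally show ?thesis
    unfolding S_def .
qed

lemma compact_PiE_UNIV:
  fixes U :: "'i::finite \<Rightarrow> 'u::euclidean_space set"
  assumes "\<And>i. compact (U i)"
  shows "compact (Pi\<^sub>E UNIV U)"
  using assms compactin_PiE[of "\<lambda>i. euclidean" UNIV U]
  by (simp add: euclidean_product_topology)

lemma continuous_on_apply_componentwise:
  fixes h :: "'i \<Rightarrow> 'y::topological_space \<Rightarrow> 'u::topological_space"
  assumes "\<And>i. continuous_on UNIV (h i)"
  shows "continuous_on UNIV (\<lambda>y::'i \<Rightarrow> 'y. \<lambda>i. h i (y i))"
proof (rule continuous_on_coordinatewise_then_product)
  show "continuous_on UNIV (\<lambda>y::'i \<Rightarrow> 'y. h i (y i))" for i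
    by (rule continuous_on_compose2[OF assms continuous_on_product_coordinates]) auto
qed

lemma borel_measurable_cost_of_policy:
  fixes c :: "'x::second_countable_topology \<times> ('i::finite \<Rightarrow> 'u::euclidean_space) \<Rightarrow> real"
    and \<gamma> :: "'i \<Rightarrow> 'y::second_countable_topology \<Rightarrow> 'u"
  assumes c: "c \<in> borel_measurable borel" and \<gamma>: "\<And>i. \<gamma> i \<in> borel_measurable borel"
  shows "(\<lambda>z::'x \<times> ('i \<Rightarrow> 'y). c (fst z, \<lambda>i. \<gamma> i (snd z i))) \<in> borel_measurable borel"
proof -
  from measurable_comp[OF borel_measurable_snd_apply \<gamma>]
  have "(\<lambda>z::'x \<times> ('i \<Rightarrow> 'y). \<gamma> i (snd z i)) \<in> borel_measurable borel" for i
    by (simp add: comp_def)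
  then have "(\<lambda>z::'x \<times> ('i \<Rightarrow> 'y). \<lambda>i. \<gamma> i (snd z i)) \<in> borel_measurable borel"
    by (rule measurable_coordinatewise_then_product)
  then have "(\<lambda>z::'x \<times> ('i \<Rightarrow> 'y). (fst z, \<lambda>i. \<gamma> i (snd z i))) \<in> borel \<rightarrow>\<^sub>M borel \<Otimes>\<^sub>M borel"
    by (rule measurable_Pair[OF borel_measurable_fst_borel])
  from measurable_comp[OF this[unfolded borel_prod] c] show ?thesis
    by (simp add: comp_def)
qed

lemma team_policies_measurable: "\<gamma> \<in> team_policies U \<Longrightarrow> \<gamma> i \<in> borel_measurable borel"
  unfolding team_policies_def by auto

lemma team_policies_in_action_set: "\<gamma> \<in> team_policies U \<Longrightarrow> \<gamma> i y \<in> U i"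
  unfolding team_policies_def by auto

lemma team_policies_actions: "\<gamma> \<in> team_policies U \<Longrightarrow> (\<lambda>i. \<gamma> i (y i)) \<in> Pi\<^sub>E UNIV U"
  unfolding team_policies_def by auto

locale team_problem = cost_continuous_in_actions c "Pi\<^sub>E UNIV U" B
  for U :: "'i::finite \<Rightarrow> 'u::euclidean_space set"
    and c :: "'x::polish_space \<times> ('i \<Rightarrow> 'u) \<Rightarrow> real" and B :: real +
  assumes compact_action_sets: "\<And>i. compact (U i)"
begin

lemma action_sets_nonempty: "U i \<noteq> {}"
  using actions_nonempty by (simp add: PiE_eq_empty_iff)

lemma team_policies_nonempty: "team_policies U \<noteq> {}"
proof -
  have "(\<lambda>i (y::'y::topological_space). SOME u. u \<in> U i) \<in> team_policies U"
    unfolding team_policies_def using action_sets_nonempty by (simp add: some_in_eq)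
  then show ?thesis by blast
qed

lemma integrable_cost_of_policy:
  fixes \<mu> :: "('x \<times> ('i \<Rightarrow> 'y::polish_space)) measure"
  assumes \<mu>: "info_structure \<mu>" and \<gamma>: "\<gamma> \<in> team_policies U"
  shows "integrable \<mu> (\<lambda>z. c (fst z, \<lambda>i. \<gamma> i (snd z i)))"
  using cost_bounded[OF team_policies_actions[OF \<gamma>]]
    borel_measurable_cost_of_policy[OF borel_measurable_cost team_policies_measurable[OF \<gamma>]]
  by (intro integrable_bounded_info_structure[OF \<mu>]) auto

lemma abs_team_cost_le:
  fixes \<mu> :: "('x \<times> ('i \<Rightarrow> 'y::polish_space)) measure"
  assumes \<mu>: "info_structure \<mu>" and \<gamma>: "\<gamma> \<in> team_policies U"
  shows "\<bar>team_cost c \<mu> \<gamma>\<bar> \<le> B"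
proof -
  interpret prob_space \<mu>
    using \<mu> unfolding info_structure_def by simp
  have "\<bar>team_cost c \<mu> \<gamma>\<bar> \<le> (\<integral>z. \<bar>c (fst z, \<lambda>i. \<gamma> i (snd z i))\<bar> \<partial>\<mu>)"
    unfolding team_cost_def by (rule integral_abs_bound)
  also have "\<dots> \<le> (\<integral>z. B \<partial>\<mu>)"
    using integrable_cost_of_policy[OF \<mu> \<gamma>] cost_bounded[OF team_policies_actions[OF \<gamma>]]
    by (intro integral_mono) auto
  finally show ?thesis
    by (simp add: prob_space)
qed

lemma team_value_le_team_cost:
  fixes \<mu> :: "('x \<times> ('i \<Rightarrow> 'y::polish_space)) measure"
  assumes \<mu>: "info_structure \<mu>" and \<gamma>: "\<gamma> \<in> team_policies U"
  shows "team_value U c \<mu> \<le> team_cost c \<mu> \<gamma>"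
proof -
  have "bdd_below (team_cost c \<mu> ` team_policies U)"
  proof (rule bdd_belowI2)
    fix \<gamma>' :: "'i \<Rightarrow> 'y \<Rightarrow> 'u" assume "\<gamma>' \<in> team_policies U"
    then show "- B \<le> team_cost c \<mu> \<gamma>'"
      using abs_team_cost_le[OF \<mu>] by fastforce
  qed
  then show ?thesis
    unfolding team_value_def by (rule cINF_lower[OF _ \<gamma>])
qed

lemma team_value_approx:
  fixes \<mu> :: "('x \<times> ('i \<Rightarrow> 'y::polish_space)) measure"
  assumes "e > 0"
  obtains \<gamma> where "\<gamma> \<in> team_policies U" "team_cost c \<mu> \<gamma> < team_value U c \<mu> + e"
proof -
  have "Inf (team_cost c \<mu> ` team_policies U) < team_value U c \<mu> + e"
    using assms by (simp add: team_value_def)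
  then show ?thesis
    using cInf_lessD[of "team_cost c \<mu> ` team_policies U"] team_policies_nonempty that by blast
qed

lemma integrable_action_modulus_fst:
  fixes M :: "('x \<times> ('i \<Rightarrow> 'y::polish_space)) measure"
  assumes M: "info_structure M" and \<delta>: "\<delta> > 0"
  shows "integrable M (\<lambda>z. action_modulus c (Pi\<^sub>E UNIV U) (fst z) \<delta>)"
  using action_modulus_nonneg[OF \<delta>] action_modulus_le[OF \<delta>]
    measurable_comp[OF borel_measurable_fst_borel borel_measurable_action_modulus]
  by (intro integrable_bounded_info_structure[OF M, where K="2 * B"]) (auto simp: comp_def)

lemma integral_action_modulus_fst:
  fixes M :: "('x \<times> ('i \<Rightarrow> 'y::polish_space)) measure"
  assumes M: "info_structure M"
  shows "(\<integral>z. action_modulus c (Pi\<^sub>E UNIV U) (fst z) \<delta> \<partial>M)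
    = (\<integral>x. action_modulus c (Pi\<^sub>E UNIV U) x \<delta> \<partial>prior M)"
  unfolding prior_def
  by (rule integral_marginal[OF M borel_measurable_fst_borel borel_measurable_action_modulus])

lemma integrable_policy_distance:
  fixes M :: "('x \<times> ('i \<Rightarrow> 'y::polish_space)) measure"
  assumes M: "info_structure M" and h: "h \<in> team_policies U" and \<gamma>: "\<gamma> \<in> team_policies U"
  shows "integrable M (\<lambda>z. dist (h i (snd z i)) (\<gamma> i (snd z i)))"
proof -
  obtain R where R: "\<And>u. u \<in> U i \<Longrightarrow> norm u \<le> R"
    using compact_imp_bounded[OF compact_action_sets[of i]] unfolding bounded_iff by blast
  show ?thesis
  proof (rule integrable_bounded_info_structure[OF M, where K="R + R"])
    have "(\<lambda>y. dist (h i y) (\<gamma> i y)) \<in> borel_measurable borel"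
      using team_policies_measurable[OF h] team_policies_measurable[OF \<gamma>] by measurable
    from measurable_comp[OF borel_measurable_snd_apply this]
    show "(\<lambda>z. dist (h i (snd z i)) (\<gamma> i (snd z i))) \<in> borel_measurable borel"
      by (simp add: comp_def)
    show "\<bar>dist (h i (snd z i)) (\<gamma> i (snd z i))\<bar> \<le> R + R" for z
      using norm_triangle_ineq4[of "h i (snd z i)" "\<gamma> i (snd z i)"]
        R[OF team_policies_in_action_set[OF h, of i "snd z i"]]
        R[OF team_policies_in_action_set[OF \<gamma>, of i "snd z i"]]
      by (simp add: dist_norm)
  qed
qed

lemma cost_diff_le_action_modulus_sum:
  assumes u: "u \<in> Pi\<^sub>E UNIV U" and v: "v \<in> Pi\<^sub>E UNIV U" and \<delta>: "\<delta> > 0"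
  shows "c (x, u) - c (x, v)
    \<le> action_modulus c (Pi\<^sub>E UNIV U) x \<delta> + 4 * B / \<delta> * (\<Sum>i\<in>UNIV. dist (u i) (v i))"
proof -
  have "2 * B / \<delta> * dist u v \<le> 2 * B / \<delta> * (2 * (\<Sum>i\<in>UNIV. dist (u i) (v i)))"
    using dist_fun_le_sum[of u v] cost_bound_nonneg \<delta> by (intro mult_left_mono) auto
  then show ?thesis
    using cost_diff_le_action_modulus[OF u v \<delta>, of x] by simp
qed

lemma continuous_policy_L1_approx:
  fixes \<mu> :: "('x \<times> ('i \<Rightarrow> 'y::polish_space)) measure"
  assumes \<mu>: "info_structure \<mu>" and \<gamma>: "\<gamma> \<in> team_policies U" and convex: "\<And>i. convex (U i)"
    and \<eta>: "\<eta> > 0"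
  obtains h where "h \<in> team_policies U" "\<And>i. continuous_on UNIV (h i)"
    "\<And>i. (\<integral>y. dist (h i y) (\<gamma> i y) \<partial>distr \<mu> borel (\<lambda>z. snd z i)) < \<eta>"
proof -
  have "\<forall>i. \<exists>g. continuous_on UNIV g \<and> (\<forall>y. g y \<in> U i) \<and>
      (\<integral>y. dist (g y) (\<gamma> i y) \<partial>distr \<mu> borel (\<lambda>z. snd z i)) < \<eta>"
  proof
    fix i
    obtain g where "continuous_on UNIV g" "\<And>y. g y \<in> U i"
      "(\<integral>y. dist (g y) (\<gamma> i y) \<partial>distr \<mu> borel (\<lambda>z. snd z i)) < \<eta>"
      by (rule L1_approx_continuous_into_convex[OF
          finite_measure_marginal[OF \<mu> borel_measurable_snd_apply[where i=i]] sets_distr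
          compact_action_sets[of i] convex[of i] action_sets_nonempty[of i]
          team_policies_measurable[OF \<gamma>, of i] team_policies_in_action_set[OF \<gamma>, of i] \<eta>]) blast
    then show "\<exists>g. continuous_on UNIV g \<and> (\<forall>y. g y \<in> U i) \<and>
        (\<integral>y. dist (g y) (\<gamma> i y) \<partial>distr \<mu> borel (\<lambda>z. snd z i)) < \<eta>"
      by blast
  qed
  then obtain h where h: "\<And>i. continuous_on UNIV (h i)" "\<And>i y. h i y \<in> U i"
    "\<And>i. (\<integral>y. dist (h i y) (\<gamma> i y) \<partial>distr \<mu> borel (\<lambda>z. snd z i)) < \<eta>"
    using choice[of "\<lambda>i g. continuous_on UNIV g \<and> (\<forall>y. g y \<in> U i) \<and>
      (\<integral>y. dist (g y) (\<gamma> i y) \<partial>distr \<mu> borel (\<lambda>z. snd z i)) < \<eta>"] by blast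
  moreover have "h \<in> team_policies U"
    unfolding team_policies_def using h(1,2) borel_measurable_continuous_onI by blast
  ultimately show ?thesis
    using that by blast
qed

lemma team_cost_diff_le:
  fixes \<mu> :: "('x \<times> ('i \<Rightarrow> 'y::polish_space)) measure"
  assumes \<mu>: "info_structure \<mu>" and h: "h \<in> team_policies U" and \<gamma>: "\<gamma> \<in> team_policies U"
    and \<delta>: "\<delta> > 0"
  shows "team_cost c \<mu> h - team_cost c \<mu> \<gamma> \<le> (\<integral>x. action_modulus c (Pi\<^sub>E UNIV U) x \<delta> \<partial>prior \<mu>)
      + 4 * B / \<delta> * (\<Sum>i\<in>UNIV. \<integral>y. dist (h i y) (\<gamma> i y) \<partial>distr \<mu> borel (\<lambda>z. snd z i))"
proof -
  let ?\<omega> = "\<lambda>x. action_modulus c (Pi\<^sub>E UNIV U) x \<delta>"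
  let ?d = "\<lambda>i y. dist (h i y) (\<gamma> i y)"
  have d_meas: "?d i \<in> borel_measurable borel" for i
    using team_policies_measurable[OF h] team_policies_measurable[OF \<gamma>] by measurable
  note \<omega>_int = integrable_action_modulus_fst[OF \<mu> \<delta>]
  note d_int = integrable_policy_distance[OF \<mu> h \<gamma>]
  have "c (fst z, \<lambda>i. h i (snd z i)) - c (fst z, \<lambda>i. \<gamma> i (snd z i))
      \<le> ?\<omega> (fst z) + 4 * B / \<delta> * (\<Sum>i\<in>UNIV. ?d i (snd z i))" for z
    by (rule cost_diff_le_action_modulus_sum[OF team_policies_actions[OF h] team_policies_actions[OF \<gamma>] \<delta>])
  then have "(\<integral>z. c (fst z, \<lambda>i. h i (snd z i)) - c (fst z, \<lambda>i. \<gamma> i (snd z i)) \<partial>\<mu>)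
      \<le> (\<integral>z. ?\<omega> (fst z) + 4 * B / \<delta> * (\<Sum>i\<in>UNIV. ?d i (snd z i)) \<partial>\<mu>)"
    using integrable_cost_of_policy[OF \<mu> h] integrable_cost_of_policy[OF \<mu> \<gamma>] \<omega>_int d_int
    by (intro integral_mono) auto
  then have "team_cost c \<mu> h - team_cost c \<mu> \<gamma>
      \<le> (\<integral>z. ?\<omega> (fst z) + 4 * B / \<delta> * (\<Sum>i\<in>UNIV. ?d i (snd z i)) \<partial>\<mu>)"
    unfolding team_cost_def
    using integrable_cost_of_policy[OF \<mu> h] integrable_cost_of_policy[OF \<mu> \<gamma>] by simp
  also have "\<dots> = (\<integral>z. ?\<omega> (fst z) \<partial>\<mu>) + 4 * B / \<delta> * (\<Sum>i\<in>UNIV. \<integral>z. ?d i (snd z i) \<partial>\<mu>)"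
    using \<omega>_int d_int by (simp add: integral_sum)
  also have "\<dots> = (\<integral>x. ?\<omega> x \<partial>prior \<mu>) + 4 * B / \<delta> * (\<Sum>i\<in>UNIV. \<integral>y. ?d i y \<partial>distr \<mu> borel (\<lambda>z. snd z i))"
    by (simp add: integral_action_modulus_fst[OF \<mu>] integral_marginal[OF \<mu> borel_measurable_snd_apply d_meas])
  finally show ?thesis .
qed

lemma continuous_policy_approx:
  fixes \<mu> :: "('x \<times> ('i \<Rightarrow> 'y::polish_space)) measure"
  assumes \<mu>: "info_structure \<mu>" and \<gamma>: "\<gamma> \<in> team_policies U" and convex: "\<And>i. convex (U i)"
    and e: "e > 0"
  obtains h where "h \<in> team_policies U" "\<And>i. continuous_on UNIV (h i)"
    "team_cost c \<mu> h < team_cost c \<mu> \<gamma> + e"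
proof -
  obtain \<delta> where \<delta>: "\<delta> > 0" "(\<integral>x. action_modulus c (Pi\<^sub>E UNIV U) x \<delta> \<partial>prior \<mu>) < e/2"
    by (rule integral_action_modulus_small[OF finite_measure_prior[OF \<mu>] sets_prior, of "e/2"]) (use e in auto)
  define \<eta> where "\<eta> = e * \<delta> / (8 * (B + 1)) / CARD('i)"
  have \<eta>: "\<eta> > 0"
    unfolding \<eta>_def using e \<delta>(1) cost_bound_nonneg by simp
  obtain h where hpol: "h \<in> team_policies U" and h: "\<And>i. continuous_on UNIV (h i)"
    "\<And>i. (\<integral>y. dist (h i y) (\<gamma> i y) \<partial>distr \<mu> borel (\<lambda>z. snd z i)) < \<eta>"
    by (rule continuous_policy_L1_approx[OF \<mu> \<gamma> convex \<eta>]) blast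
  have "4 * B / \<delta> * (\<Sum>i\<in>UNIV. \<integral>y. dist (h i y) (\<gamma> i y) \<partial>distr \<mu> borel (\<lambda>z. snd z i))
      \<le> 4 * B / \<delta> * (\<Sum>i\<in>(UNIV::'i set). \<eta>)"
    using h(2) cost_bound_nonneg \<delta>(1) by (intro mult_left_mono sum_mono) (auto intro: less_imp_le)
  also have "\<dots> = 4 * B / \<delta> * (e * \<delta> / (8 * (B + 1)))"
    unfolding \<eta>_def by simp
  also have "\<dots> \<le> e / 2"
    using e \<delta>(1) cost_bound_nonneg by (simp add: field_simps add_pos_nonneg)
  finally show ?thesis
    using team_cost_diff_le[OF \<mu> hpol \<gamma> \<delta>(1)] \<delta>(2) by (intro that[OF hpol h(1)]) linarith
qed

lemma team_cost_tendsto_of_joint_continuity: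
  fixes \<mu>s :: "nat \<Rightarrow> ('x \<times> ('i \<Rightarrow> 'y::polish_space)) measure" and \<mu>
  assumes conv: "weak_conv_seq \<mu>s \<mu>"
    and c: "continuous_on (UNIV \<times> Pi\<^sub>E UNIV U) c"
    and h: "h \<in> team_policies U" "\<And>i. continuous_on UNIV (h i)"
  shows "(\<lambda>m. team_cost c (\<mu>s m) h) \<longlonglongrightarrow> team_cost c \<mu> h"
proof -
  have "continuous_on UNIV (\<lambda>z::'x \<times> ('i \<Rightarrow> 'y). (fst z, \<lambda>i. h i (snd z i)))"
    by (intro continuous_on_Pair continuous_on_fst continuous_on_id
        continuous_on_compose2[OF continuous_on_apply_componentwise[OF h(2)] continuous_on_snd]) auto
  then have "continuous_on UNIV (\<lambda>z::'x \<times> ('i \<Rightarrow> 'y). c (fst z, \<lambda>i. h i (snd z i)))"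
    using team_policies_actions[OF h(1)] by (intro continuous_on_compose2[OF c]) auto
  moreover have "bounded (range (\<lambda>z::'x \<times> ('i \<Rightarrow> 'y). c (fst z, \<lambda>i. h i (snd z i))))"
    unfolding bounded_iff using cost_bounded[OF team_policies_actions[OF h(1)]] by auto
  ultimately show ?thesis
    using conv unfolding weak_conv_seq_def team_cost_def by blast
qed

lemma partition_weight_of_policy:
  fixes p :: "('i \<Rightarrow> 'u) \<Rightarrow> ('i \<Rightarrow> 'u) \<Rightarrow> real"
  assumes h: "h \<in> team_policies U" "\<And>i. continuous_on UNIV (h i)"
    and N: "finite N" and w: "w \<in> N"
    and p: "\<And>w. continuous_on (Pi\<^sub>E UNIV U) (p w)" "\<And>w u. 0 \<le> p w u"
      "\<And>u. u \<in> Pi\<^sub>E UNIV U \<Longrightarrow> (\<Sum>w\<in>N. p w u) = 1"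
  shows "continuous_on UNIV (\<lambda>y. p w (\<lambda>i. h i (y i)))" "\<bar>p w (\<lambda>i. h i (y i))\<bar> \<le> 1"
proof -
  show "continuous_on UNIV (\<lambda>y. p w (\<lambda>i. h i (y i)))"
    using team_policies_actions[OF h(1)]
    by (intro continuous_on_compose2[OF p(1) continuous_on_apply_componentwise[OF h(2)]]) auto
  show "\<bar>p w (\<lambda>i. h i (y i))\<bar> \<le> 1"
    using member_le_sum[of w N "\<lambda>w. p w (\<lambda>i. h i (y i))"] p(2,3) team_policies_actions[OF h(1)] N w
    by simp
qed

lemma team_cost_partition_of_unity_approx:
  fixes M :: "('x \<times> ('i \<Rightarrow> 'y::polish_space)) measure"
  assumes M: "info_structure M" and h: "h \<in> team_policies U" "\<And>i. continuous_on UNIV (h i)"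
    and \<delta>: "\<delta> > 0" and N: "finite N" "N \<subseteq> Pi\<^sub>E UNIV U"
    and p: "\<And>w. continuous_on (Pi\<^sub>E UNIV U) (p w)" "\<And>w u. 0 \<le> p w u"
      "\<And>u. u \<in> Pi\<^sub>E UNIV U \<Longrightarrow> (\<Sum>w\<in>N. p w u) = 1" "\<And>w u. p w u \<noteq> 0 \<Longrightarrow> dist u w < \<delta>"
  shows "\<bar>team_cost c M h - (\<Sum>w\<in>N. \<integral>z. c (fst z, w) * p w (\<lambda>i. h i (snd z i)) \<partial>M)\<bar>
    \<le> (\<integral>x. action_modulus c (Pi\<^sub>E UNIV U) x \<delta> \<partial>prior M)"
proof -
  let ?G = "\<lambda>z. \<lambda>i. h i (snd z i)"
  have int_w: "integrable M (\<lambda>z. c (fst z, w) * p w (?G z))" if "w \<in> N" for w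
    using borel_measurable_cost_slice cost_bounded N(2) that
      partition_weight_of_policy[OF h N(1) that p(1-3)] borel_measurable_continuous_onI
    by (intro integrable_fst_mult_snd[OF M, where Ka=B and Kb=1]) auto
  have "\<bar>team_cost c M h - (\<Sum>w\<in>N. \<integral>z. c (fst z, w) * p w (?G z) \<partial>M)\<bar>
      = \<bar>\<integral>z. c (fst z, ?G z) - (\<Sum>w\<in>N. c (fst z, w) * p w (?G z)) \<partial>M\<bar>"
    unfolding team_cost_def using integrable_cost_of_policy[OF M h(1)] int_w
    by (simp add: integral_sum[symmetric])
  also have "\<dots> \<le> (\<integral>z. action_modulus c (Pi\<^sub>E UNIV U) (fst z) \<delta> \<partial>M)"
  proof (rule order_trans[OF integral_abs_bound integral_mono'])
    show "integrable M (\<lambda>z. action_modulus c (Pi\<^sub>E UNIV U) (fst z) \<delta>)"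
      by (rule integrable_action_modulus_fst[OF M \<delta>])
    show "\<bar>c (fst z, ?G z) - (\<Sum>w\<in>N. c (fst z, w) * p w (?G z))\<bar>
        \<le> action_modulus c (Pi\<^sub>E UNIV U) (fst z) \<delta>" for z
      using team_policies_actions[OF h(1)]
      by (intro cost_partition_of_unity_approx[where p=p and u="?G z" and \<delta>=\<delta>, OF N p(2) p(3) p(4)])
    show "0 \<le> action_modulus c (Pi\<^sub>E UNIV U) (fst z) \<delta>" for z
      by (rule action_modulus_nonneg[OF \<delta>])
  qed
  also have "\<dots> = (\<integral>x. action_modulus c (Pi\<^sub>E UNIV U) x \<delta> \<partial>prior M)"
    by (rule integral_action_modulus_fst[OF M])
  finally show ?thesis .
qed

lemma team_cost_tendsto_fixed_prior:
  fixes \<mu>s :: "nat \<Rightarrow> ('x \<times> ('i \<Rightarrow> 'y::polish_space)) measure" and \<mu>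
  assumes \<mu>s: "\<And>m. info_structure (\<mu>s m)" and \<mu>: "info_structure \<mu>"
    and prior: "\<And>m. prior (\<mu>s m) = prior \<mu>" and conv: "weak_conv_seq \<mu>s \<mu>"
    and h: "h \<in> team_policies U" "\<And>i. continuous_on UNIV (h i)"
  shows "(\<lambda>m. team_cost c (\<mu>s m) h) \<longlonglongrightarrow> team_cost c \<mu> h"
proof (rule tendsto_of_uniform_approx)
  fix e :: real assume e: "e > 0"
  obtain \<delta> where \<delta>: "\<delta> > 0" "(\<integral>x. action_modulus c (Pi\<^sub>E UNIV U) x \<delta> \<partial>prior \<mu>) < e"
    by (rule integral_action_modulus_small[OF finite_measure_prior[OF \<mu>] sets_prior e])
  obtain N and p :: "('i \<Rightarrow> 'u) \<Rightarrow> ('i \<Rightarrow> 'u) \<Rightarrow> real" where N: "finite N" "N \<subseteq> Pi\<^sub>E UNIV U"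
    and p: "\<And>w. continuous_on (Pi\<^sub>E UNIV U) (p w)" "\<And>w u. 0 \<le> p w u"
      "\<And>u. u \<in> Pi\<^sub>E UNIV U \<Longrightarrow> (\<Sum>w\<in>N. p w u) = 1" "\<And>w u. p w u \<noteq> 0 \<Longrightarrow> dist u w < \<delta>"
    by (rule finite_partition_of_unity_balls[OF compact_actions \<delta>(1)]) blast
  define F where "F M = (\<Sum>w\<in>N. \<integral>z. c (fst z, w) * p w (\<lambda>i. h i (snd z i)) \<partial>M)" for M
  have close: "\<bar>team_cost c M h - F M\<bar> \<le> e" if M: "info_structure M" "prior M = prior \<mu>" for M
    using team_cost_partition_of_unity_approx[OF M(1) h \<delta>(1) N p] M(2) \<delta>(2) unfolding F_def by simp
  have "(\<lambda>m. F (\<mu>s m)) \<longlonglongrightarrow> F \<mu>"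
    unfolding F_def
    using borel_measurable_cost_slice cost_bounded N(2) partition_weight_of_policy[OF h N(1) _ p(1-3)]
    by (intro tendsto_sum tendsto_integral_fst_mult_snd_fixed_prior[OF \<mu>s \<mu> prior conv, where Ka=B and Kb=1])
      auto
  then show "\<exists>g l. g \<longlonglongrightarrow> l \<and> (\<forall>m. \<bar>team_cost c (\<mu>s m) h - g m\<bar> \<le> e) \<and> \<bar>team_cost c \<mu> h - l\<bar> \<le> e"
    using close[OF \<mu>s prior] close[OF \<mu> refl] by blast
qed

end

theorem theorem4p3:
  fixes U :: "'i::finite \<Rightarrow> 'u::euclidean_space set"
    and c :: "'x::polish_space \<times> ('i \<Rightarrow> 'u) \<Rightarrow> real"
    and \<mu>s :: "nat \<Rightarrow> ('x \<times> ('i \<Rightarrow> 'y::polish_space)) measure"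
    and \<mu> :: "('x \<times> ('i \<Rightarrow> 'y)) measure"
  assumes A1_meas: "c \<in> borel_measurable borel"
    and A1_bdd: "\<exists>B. \<forall>x. \<forall>u\<in>(\<Pi>\<^sub>E i\<in>UNIV. U i). \<bar>c (x, u)\<bar> \<le> B"
    and A4: "\<And>i. compact (U i)"
    and U_ne: "\<And>i. U i \<noteq> {}"
    and A5: "\<And>x. continuous_on (\<Pi>\<^sub>E i\<in>UNIV. U i) (\<lambda>u. c (x, u))"
    and A7: "\<And>i. convex (U i)"
    and info_m: "\<And>m. info_structure (\<mu>s m)"
    and info: "info_structure \<mu>"
    and A3_m: "\<And>m. assumption_A3 (\<mu>s m)"
    and A3: "assumption_A3 \<mu>"
    and conv: "weak_conv_seq \<mu>s \<mu>"
    and case_ab: "(\<forall>m. prior (\<mu>s m) = prior \<mu>) \<or> continuous_on (UNIV \<times> (\<Pi>\<^sub>E i\<in>UNIV. U i)) c"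
  shows "limsup (\<lambda>m. ereal (team_value U c (\<mu>s m))) \<le> ereal (team_value U c \<mu>)"
proof -
  obtain B where "\<forall>x. \<forall>u\<in>(\<Pi>\<^sub>E i\<in>UNIV. U i). \<bar>c (x, u)\<bar> \<le> B"
    using A1_bdd by blast
  then interpret team_problem U c B
    using A1_meas A4 U_ne A5 compact_PiE_UNIV[OF A4]
    by unfold_locales (auto simp: PiE_eq_empty_iff)
  show ?thesis
  proof (rule ereal_le_epsilon2)
    fix e :: real assume e: "0 < e"
    obtain \<gamma> where \<gamma>: "\<gamma> \<in> team_policies U" "team_cost c \<mu> \<gamma> < team_value U c \<mu> + e/2"
      using team_value_approx[of "e/2"] e by auto
    obtain h where h: "h \<in> team_policies U" "\<And>i. continuous_on UNIV (h i)"
      "team_cost c \<mu> h < team_cost c \<mu> \<gamma> + e/2"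
      using continuous_policy_approx[OF info \<gamma>(1) A7, of "e/2"] e by auto
    have "(\<lambda>m. team_cost c (\<mu>s m) h) \<longlonglongrightarrow> team_cost c \<mu> h"
      using case_ab team_cost_tendsto_fixed_prior[OF info_m info _ conv h(1,2)]
        team_cost_tendsto_of_joint_continuity[OF conv _ h(1,2)] by blast
    then have "limsup (\<lambda>m. ereal (team_cost c (\<mu>s m) h)) = ereal (team_cost c \<mu> h)"
      by (intro lim_imp_Limsup) auto
    moreover have "limsup (\<lambda>m. ereal (team_value U c (\<mu>s m))) \<le> limsup (\<lambda>m. ereal (team_cost c (\<mu>s m) h))"
      using team_value_le_team_cost[OF info_m h(1)] by (intro Limsup_mono) simp
    moreover have "ereal (team_cost c \<mu> h) \<le> ereal (team_value U c \<mu>) + ereal e"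
      using \<gamma>(2) h(3) by simp
    ultimately show "limsup (\<lambda>m. ereal (team_value U c (\<mu>s m))) \<le> ereal (team_value U c \<mu>) + ereal e"
      by (metis order_trans)
  qed
qed

end
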